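(* Let $1\le q\le k$, $n\ge 2$, $f\in P_1^{k,q}$, and for $i=1,\dots,n$ let $a_i,b_i\in E_k$ with $\gcd(a_i,k)=1$ and $g_i(x_i)=[a_if(x_i)+b_i]\bmod k$. Let $h(x_1,\dots,x_n)=[g_1(x_1)+\dots+g_n(x_n)]\bmod k$. Let $1<t\le n$ and distinct indices $j_1,\dots,j_t\in\{1,\dots,n\}$ satisfy $\gcd(a_{j_1}+a_{j_2}+\dots+a_{j_t},k)=1$. Then the function obtained from $h$ by identifying the variables $x_{j_1},\dots,x_{j_t}$ (i.e. substituting one common variable $z$ — either a new variable or one of $x_{j_1},\dots,x_{j_t}$ — for all of them), regarded as a function of $z$ and the remaining $n-t$ variables, belongs to $P_{n-t+1}^k$ and is an $H(q)$-function.
   Context: $E_k=\{0,1,\dots,k-1\}$, $k\ge 2$, with arithmetic modulo $k$. $P_m^k$ is the set of all functions $E_k^m\to E_k$; $P_1^{k,q}$ is the set of functions $E_k\to E_k$ taking exactly $q$ distinct values. For a variable $x$ of a function $g$, $\mathrm{Spr}(x,g)$ is the set of numbers of distinct values of all one-variable functions obtained from $g$ by fixing all variables other than $x$ to constants (for a function of the single variable $x$, this is $\{$number of its distinct values$\}$). A function $g$ is an $H(q)$-function if $\mathrm{Spr}(x,g)=\{q\}$ for every variable $x$ of $g$. *)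

theory Defs
  imports Main
begin

text \<open>Functions of k-valued logic over a finite set V of variable indices:
  a function is g :: (nat \<Rightarrow> nat) \<Rightarrow> nat, applied to assignments
  x with x i \<in> E_k = {..<k} for i \<in> V.\<close>

definition in_Pk :: "nat \<Rightarrow> nat set \<Rightarrow> ((nat \<Rightarrow> nat) \<Rightarrow> nat) \<Rightarrow> bool" where
  "in_Pk k V g \<longleftrightarrow> finite V \<and>
     (\<forall>x. (\<forall>i\<in>V. x i < k) \<longrightarrow> g x < k) \<and>
     (\<forall>x y. (\<forall>i\<in>V. x i = y i) \<longrightarrow> g x = g y)"

definition Spr :: "nat \<Rightarrow> nat set \<Rightarrow> ((nat \<Rightarrow> nat) \<Rightarrow> nat) \<Rightarrow> nat \<Rightarrow> nat set" where
  "Spr k V g v = {card ((\<lambda>c. g (x(v := c))) ` {..<k}) | x. \<forall>i\<in>V. x i < k}"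

definition H_function :: "nat \<Rightarrow> nat \<Rightarrow> nat set \<Rightarrow> ((nat \<Rightarrow> nat) \<Rightarrow> nat) \<Rightarrow> bool" where
  "H_function k q V g \<longleftrightarrow> (\<forall>v\<in>V. Spr k V g v = {q})"

end

theory Submission
  imports Defs "HOL-Number_Theory.Cong"
begin

(* After identifying the variables x_j (j \<in> J) with one variable z,
   the function h' is still a sum of terms (a_i f(x_i) + b_i) mod k.  Fix a
   variable v of h' and all other variables.  Collecting the terms that depend
   on v (the single term i = v, or all terms i \<in> J if v = z) shows that the
   resulting one-variable function is c \<mapsto> (A f(c) + C) mod k, where A is a_v
   resp. the sum of the a_j over J; in both cases A is coprime to k.  Since
   u \<mapsto> (A u + C) mod k is injective on E_k, this function takes exactly as
   many values as f, namely q.  Hence Spr(v, h') = {q} for every variable v. *)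

lemma affine_mod_inj_on:
  fixes A C k :: nat
  assumes "coprime A k"
  shows "inj_on (\<lambda>u. (A * u + C) mod k) {..<k}"
proof (rule inj_onI)
  fix u u' assume u: "u \<in> {..<k}" and u': "u' \<in> {..<k}"
    and eq: "(A * u + C) mod k = (A * u' + C) mod k"
  have "[A * u + C = A * u' + C] (mod k)" using eq by (simp add: cong_def)
  then have "[A * u = A * u'] (mod k)" by (simp add: cong_add_rcancel_nat)
  then have "[u = u'] (mod k)" using cong_mult_lcancel_nat[OF assms] by blast
  then show "u = u'" using u u' cong_less_modulus_unique_nat by auto
qed

lemma card_affine_image:
  fixes A C k :: nat and f :: "nat \<Rightarrow> nat"
  assumes "coprime A k" and "f ` {..<k} \<subseteq> {..<k}"
  shows "card ((\<lambda>c. (A * f c + C) mod k) ` {..<k}) = card (f ` {..<k})"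
proof -
  have "(\<lambda>c. (A * f c + C) mod k) ` {..<k} = (\<lambda>u. (A * u + C) mod k) ` (f ` {..<k})"
    by (simp add: image_image)
  also have "card \<dots> = card (f ` {..<k})"
    by (rule card_image, rule inj_on_subset[OF affine_mod_inj_on[OF assms(1)] assms(2)])
  finally show ?thesis .
qed

lemma sum_mod_collect_equal_args:
  fixes a b f x :: "nat \<Rightarrow> nat" and k c :: nat
  assumes "finite N" and "I \<subseteq> N" and "\<forall>i\<in>I. x i = c"
  shows "(\<Sum>i\<in>N. (a i * f (x i) + b i) mod k) mod k =
     ((\<Sum>i\<in>I. a i) * f c + ((\<Sum>i\<in>I. b i) + (\<Sum>i\<in>N-I. (a i * f (x i) + b i) mod k))) mod k"
proof -
  let ?R = "\<Sum>i\<in>N-I. (a i * f (x i) + b i) mod k"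
  have "(\<Sum>i\<in>N. (a i * f (x i) + b i) mod k) = (\<Sum>i\<in>I. (a i * f (x i) + b i) mod k) + ?R"
    using sum.subset_diff[OF assms(2,1)] by (simp add: add.commute)
  also have "(\<Sum>i\<in>I. (a i * f (x i) + b i) mod k) = (\<Sum>i\<in>I. (a i * f c + b i) mod k)"
    using assms(3) by simp
  finally have "(\<Sum>i\<in>N. (a i * f (x i) + b i) mod k) mod k
      = ((\<Sum>i\<in>I. (a i * f c + b i) mod k) + ?R) mod k" by simp
  also have "\<dots> = ((\<Sum>i\<in>I. (a i * f c + b i) mod k) mod k + ?R) mod k"
    by (simp add: mod_add_left_eq)
  also have "(\<Sum>i\<in>I. (a i * f c + b i) mod k) mod k = (\<Sum>i\<in>I. a i * f c + b i) mod k"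
    by (rule mod_sum_eq)
  also have "((\<Sum>i\<in>I. a i * f c + b i) mod k + ?R) mod k = ((\<Sum>i\<in>I. a i * f c + b i) + ?R) mod k"
    by (simp add: mod_add_left_eq)
  also have "(\<Sum>i\<in>I. a i * f c + b i) = (\<Sum>i\<in>I. a i) * f c + (\<Sum>i\<in>I. b i)"
    by (simp add: sum.distrib sum_distrib_right)
  finally show ?thesis by (simp add: add.assoc)
qed

lemma identified_sum_affine_in_variable:
  fixes a b f x :: "nat \<Rightarrow> nat" and k z v :: nat
  assumes "finite N" and "J \<subseteq> N" and "z \<notin> N - J" and "v \<in> insert z (N - J)"
  shows "\<exists>C. \<forall>c. (\<Sum>i\<in>N. (a i * f (if i \<in> J then (x(v := c)) z else (x(v := c)) i) + b i) mod k) mod k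
              = ((\<Sum>i\<in>(if v = z then J else {v}). a i) * f c + C) mod k"
proof -
  define I where "I = (if v = z then J else {v})"
  define y where "y = (\<lambda>c i. if i \<in> J then (x(v := c)) z else (x(v := c)) i)"
  have I_sub: "I \<subseteq> N" unfolding I_def using assms(2,4) by auto
  have y_on_I: "\<forall>i\<in>I. y c i = c" for c
    unfolding I_def y_def using assms(4) by auto
  have y_off_I: "y c i = y 0 i" if "i \<in> N - I" for c i
    using that assms(3,4) unfolding I_def y_def by (auto split: if_splits)
  define C where "C = (\<Sum>i\<in>I. b i) + (\<Sum>i\<in>N-I. (a i * f (y 0 i) + b i) mod k)"
  have "(\<Sum>i\<in>N. (a i * f (y c i) + b i) mod k) mod k = ((\<Sum>i\<in>I. a i) * f c + C) mod k" for c
  proof -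
    have "(\<Sum>i\<in>N. (a i * f (y c i) + b i) mod k) mod k
        = ((\<Sum>i\<in>I. a i) * f c + ((\<Sum>i\<in>I. b i) + (\<Sum>i\<in>N-I. (a i * f (y c i) + b i) mod k))) mod k"
      by (rule sum_mod_collect_equal_args[OF assms(1) I_sub y_on_I])
    also have "(\<Sum>i\<in>N-I. (a i * f (y c i) + b i) mod k) = (\<Sum>i\<in>N-I. (a i * f (y 0 i) + b i) mod k)"
      by (intro sum.cong refl) (simp add: y_off_I[of _ c])
    finally show ?thesis unfolding C_def .
  qed
  then show ?thesis unfolding I_def y_def by blast
qed

lemma Spr_eq_singleton:
  assumes "k > 0" and "\<And>x. card ((\<lambda>c. g (x(v := c))) ` {..<k}) = q"
  shows "Spr k V g v = {q}"
  unfolding Spr_def using assms by (auto intro!: exI[of _ "\<lambda>_. 0"])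

lemma identified_sum_restriction_card:
  fixes a b f x :: "nat \<Rightarrow> nat" and k z v :: nat
  assumes "finite N" and "J \<subseteq> N" and "z \<notin> N - J" and "v \<in> insert z (N - J)"
    and "f ` {..<k} \<subseteq> {..<k}"
    and "\<forall>i\<in>N. coprime (a i) k" and "coprime (\<Sum>i\<in>J. a i) k"
  shows "card ((\<lambda>c. (\<Sum>i\<in>N. (a i * f (if i \<in> J then (x(v := c)) z else (x(v := c)) i) + b i) mod k) mod k)
            ` {..<k}) = card (f ` {..<k})"
proof -
  obtain C where C: "\<forall>c. (\<Sum>i\<in>N. (a i * f (if i \<in> J then (x(v := c)) z else (x(v := c)) i) + b i) mod k) mod k
              = ((\<Sum>i\<in>(if v = z then J else {v}). a i) * f c + C) mod k"
    using identified_sum_affine_in_variable[OF assms(1-4)] by blast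
  have "coprime (\<Sum>i\<in>(if v = z then J else {v}). a i) k"
    using assms(4,6,7) by auto
  from card_affine_image[OF this assms(5)] C show ?thesis by simp
qed

theorem theorem2p3:
  fixes k q n t z :: nat and f a b :: "nat \<Rightarrow> nat" and J :: "nat set"
  assumes "k \<ge> 2" and "1 \<le> q" and "q \<le> k" and "n \<ge> 2"
    and "f ` {..<k} \<subseteq> {..<k}" and "card (f ` {..<k}) = q"
    and "\<forall>i\<in>{1..n}. a i < k \<and> b i < k \<and> coprime (a i) k"
    and "J \<subseteq> {1..n}" and "card J = t" and "1 < t"
    and "coprime (\<Sum>i\<in>J. a i) k"
    and "z \<notin> {1..n} - J"
  shows "let h = (\<lambda>x. (\<Sum>i=1..n. (a i * f (x i) + b i) mod k) mod k);
             V = insert z ({1..n} - J);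
             h' = (\<lambda>y. h (\<lambda>i. if i \<in> J then y z else y i))
         in card V = n - t + 1 \<and> in_Pk k V h' \<and> H_function k q V h'"
proof -
  define V where "V = insert z ({1..n} - J)"
  define h' where "h' = (\<lambda>y. (\<Sum>i=1..n. (a i * f (if i \<in> J then y z else y i) + b i) mod k) mod k)"
  have "card V = n - t + 1"
    unfolding V_def using assms(8,9,12) finite_subset[OF assms(8)] by (simp add: card_Diff_subset)
  moreover have "in_Pk k V h'"
    unfolding in_Pk_def
  proof (intro conjI allI impI)
    fix x y :: "nat \<Rightarrow> nat" assume "\<forall>i\<in>V. x i = y i"
    then show "h' x = h' y"
      unfolding h'_def V_def by (intro arg_cong[where f="\<lambda>s. s mod k"] sum.cong) auto
  qed (use assms(1) in \<open>simp_all add: V_def h'_def\<close>)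
  moreover have "H_function k q V h'"
    unfolding H_function_def
  proof
    fix v assume "v \<in> V"
    then have "card ((\<lambda>c. h' (x(v := c))) ` {..<k}) = q" for x
      using identified_sum_restriction_card[where N="{1..n}" and J=J and z=z and v=v
          and f=f and a=a and b=b and k=k and x=x] assms(5-8,11,12)
      unfolding h'_def V_def by simp
    with assms(1) show "Spr k V h' v = {q}" by (intro Spr_eq_singleton) simp_all
  qed
  ultimately show ?thesis by (simp only: Let_def V_def h'_def)
qed

end
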